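(* Let $\gamma$ be a gauge on $\mathbb{R}^d$ with skewness $\sigma$ and let $v\in\mathrm{SD}_\gamma$. Let $A\subset\mathbb{R}^d$ be finite with positive weights $w_a$ satisfying $\sum_{a\in A}w_a=1$, let $C\subseteq A$ with $w_C=\sum_{c\in C}w_c>\frac{1}{1+\sigma}$, put $D=A\setminus C$, and let $U\subset\mathbb{R}^d$ be bounded. For $M>0$ let $f_M(x)=\sum_{d\in D}w_d\gamma(x-d)+\sum_{c\in C}w_c\gamma(x-(c-Mv))$ (the Fermat–Weber objective after replacing each $c\in C$ by $c-Mv$, weights unchanged). Then there is $M_0>0$ such that for all $M>M_0$ no minimizer of $f_M$ lies in $U$.
   Context: A gauge $\gamma$ on $\mathbb{R}^d$ is the Minkowski functional of a convex compact set $B_\gamma$ with the origin in its interior (not necessarily symmetric). Its skewness is $\sigma=\sup_{x\neq0}\gamma(x)/\gamma(-x)$ and $\mathrm{SD}_\gamma=\{v:\gamma(v)=\sigma\gamma(-v)=1\}$ (nonempty). *)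

theory Defs
  imports "HOL-Analysis.Analysis"
begin

definition minkowski_fun :: "'a::euclidean_space set \<Rightarrow> 'a \<Rightarrow> real" where
  "minkowski_fun B x = Inf {t. t \<ge> 0 \<and> x \<in> (\<lambda>y. t *\<^sub>R y) ` B}"

definition gauge_body :: "'a::euclidean_space set \<Rightarrow> bool" where
  "gauge_body B \<longleftrightarrow> convex B \<and> compact B \<and> 0 \<in> interior B"

definition skewness :: "('a::euclidean_space \<Rightarrow> real) \<Rightarrow> real" where
  "skewness g = (SUP x\<in>UNIV - {0}. g x / g (- x))"

definition SD :: "('a::euclidean_space \<Rightarrow> real) \<Rightarrow> 'a set" where
  "SD g = {v. g v = 1 \<and> skewness g * g (- v) = 1}"

definition fw_shifted ::
  "('a::euclidean_space \<Rightarrow> real) \<Rightarrow> 'a set \<Rightarrow> 'a set \<Rightarrow> ('a \<Rightarrow> real) \<Rightarrow> 'a \<Rightarrow> real \<Rightarrow> 'a \<Rightarrow> real" where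
  "fw_shifted g A C w v M x =
     (\<Sum>d\<in>A - C. w d * g (x - d)) + (\<Sum>c\<in>C. w c * g (x - (c - M *\<^sub>R v)))"

end

theory Submission
  imports Defs
begin

text \<open>
  Put \<open>w\<^sub>C = \<Sum>\<^sub>c\<^sub>\<in>\<^sub>C w\<^sub>c\<close> and \<open>w\<^sub>D = 1 - w\<^sub>C\<close>. For \<open>x\<close> in the bounded set \<open>U\<close> the triangle
  inequality gives \<open>\<gamma>(x - c + Mv) \<ge> \<gamma>(Mv) - \<gamma>(c - x) = M - O(1)\<close>, so \<open>f\<^sub>M(x) \<ge> w\<^sub>C M - O(1)\<close>.
  At the point \<open>-Mv\<close> all shifted points are at bounded distance, while the others are at
  distance at most \<open>M \<gamma>(-v) + O(1) = M/\<sigma> + O(1)\<close>, so \<open>f\<^sub>M(-Mv) \<le> w\<^sub>D M/\<sigma> + O(1)\<close>.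
  The hypothesis \<open>w\<^sub>C > 1/(1+\<sigma>)\<close> says exactly \<open>w\<^sub>D/\<sigma> < w\<^sub>C\<close>, so for large \<open>M\<close> the point
  \<open>-Mv\<close> beats every point of \<open>U\<close>.
\<close>

definition minkowski_scales :: "'a::euclidean_space set \<Rightarrow> 'a \<Rightarrow> real set" where
  "minkowski_scales B x = {t. t \<ge> 0 \<and> x \<in> (\<lambda>y. t *\<^sub>R y) ` B}"

lemma minkowski_fun_eq_Inf_scales: "minkowski_fun B x = Inf (minkowski_scales B x)"
  unfolding minkowski_fun_def minkowski_scales_def by simp

lemma gauge_body_cball_subset:
  assumes "gauge_body B"
  obtains e where "e > 0" "cball 0 e \<subseteq> B"
  using assms unfolding gauge_body_def by (meson mem_interior_cball)

lemma norm_div_in_minkowski_scales: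
  assumes "e > 0" "cball 0 e \<subseteq> B"
  shows "norm x / e \<in> minkowski_scales B x"
proof (cases "x = 0")
  case True
  have "(0::'a) \<in> B" using assms by auto
  with True show ?thesis unfolding minkowski_scales_def by (auto intro!: image_eqI[where x=0])
next
  case False
  let ?t = "norm x / e"
  have t: "?t > 0" using False assms by auto
  have "x /\<^sub>R ?t \<in> cball 0 e" using t assms by (simp add: field_simps)
  then have "x /\<^sub>R ?t \<in> B" using assms by auto
  moreover have "x = ?t *\<^sub>R (x /\<^sub>R ?t)" using t assms(1) by simp
  ultimately show ?thesis
    using t unfolding minkowski_scales_def by (auto intro!: image_eqI[where x="x /\<^sub>R ?t"])
qed

lemma minkowski_fun_le: "t \<in> minkowski_scales B x \<Longrightarrow> minkowski_fun B x \<le> t"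
  unfolding minkowski_fun_eq_Inf_scales
  by (rule cInf_lower) (auto simp: minkowski_scales_def bdd_below_def)

lemma minkowski_fun_ge:
  assumes "gauge_body B" "\<And>t. t \<in> minkowski_scales B x \<Longrightarrow> z \<le> t"
  shows "z \<le> minkowski_fun B x"
proof -
  obtain e where "e > 0" "cball 0 e \<subseteq> B" using gauge_body_cball_subset assms(1) by blast
  then have "minkowski_scales B x \<noteq> {}" using norm_div_in_minkowski_scales by blast
  then show ?thesis unfolding minkowski_fun_eq_Inf_scales using assms(2) by (rule cInf_greatest)
qed

lemma minkowski_fun_nonneg: "gauge_body B \<Longrightarrow> 0 \<le> minkowski_fun B x"
  by (rule minkowski_fun_ge) (auto simp: minkowski_scales_def)

lemma minkowski_fun_le_norm:
  assumes "gauge_body B"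
  obtains e where "e > 0" "\<And>x. minkowski_fun B x \<le> norm x / e"
  using gauge_body_cball_subset[OF assms] minkowski_fun_le norm_div_in_minkowski_scales by metis

lemma minkowski_fun_bounded:
  assumes "gauge_body B" "bounded S"
  obtains K where "K \<ge> 0" "\<And>x. x \<in> S \<Longrightarrow> minkowski_fun B x \<le> K"
proof -
  obtain e where e: "e > 0" "\<And>x. minkowski_fun B x \<le> norm x / e"
    using minkowski_fun_le_norm[OF assms(1)] by blast
  obtain R where R: "R > 0" "\<And>x. x \<in> S \<Longrightarrow> norm x \<le> R"
    using assms(2) bounded_pos by metis
  have "minkowski_fun B x \<le> R / e" if "x \<in> S" for x
    using e R(2)[OF that] divide_right_mono[of "norm x" R e] order_trans by fastforce
  then show ?thesis using that[of "R / e"] R(1) e(1) by simp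
qed

lemma minkowski_scales_add:
  assumes "convex B" "0 \<in> B" "s \<in> minkowski_scales B x" "t \<in> minkowski_scales B y"
  shows "s + t \<in> minkowski_scales B (x + y)"
proof -
  obtain b1 b2 where b: "b1 \<in> B" "b2 \<in> B" "x = s *\<^sub>R b1" "y = t *\<^sub>R b2" "s \<ge> 0" "t \<ge> 0"
    using assms(3,4) unfolding minkowski_scales_def by auto
  show ?thesis
  proof (cases "s + t = 0")
    case True
    then have "s = 0" "t = 0" using b by auto
    then show ?thesis
      using b assms(2) unfolding minkowski_scales_def by (auto intro!: image_eqI[where x=0])
  next
    case False
    then have st: "s + t > 0" using b by auto
    let ?b = "(s/(s+t)) *\<^sub>R b1 + (t/(s+t)) *\<^sub>R b2"
    have "?b \<in> B" using convexD[OF assms(1) b(1,2), of "s/(s+t)" "t/(s+t)"] st b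
      by (simp add: add_divide_distrib[symmetric])
    moreover have "x + y = (s+t) *\<^sub>R ?b" using st b by (simp add: scaleR_add_right)
    ultimately show ?thesis using st unfolding minkowski_scales_def by auto
  qed
qed

lemma minkowski_fun_triangle:
  assumes "gauge_body B"
  shows "minkowski_fun B (x + y) \<le> minkowski_fun B x + minkowski_fun B y"
proof -
  have B: "convex B" "0 \<in> B" using assms interior_subset unfolding gauge_body_def by auto
  have "minkowski_fun B (x + y) - t \<le> minkowski_fun B x" if t: "t \<in> minkowski_scales B y" for t
  proof -
    have "minkowski_fun B (x + y) - t \<le> s" if "s \<in> minkowski_scales B x" for s
      using minkowski_fun_le[OF minkowski_scales_add[OF B that t]] by simp
    then show ?thesis by (rule minkowski_fun_ge[OF assms])
  qed
  then have "minkowski_fun B (x + y) - minkowski_fun B x \<le> minkowski_fun B y"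
    by (intro minkowski_fun_ge[OF assms]) (simp add: algebra_simps)
  then show ?thesis by simp
qed

lemma minkowski_fun_scaleR_le:
  assumes "gauge_body B" "r > 0"
  shows "minkowski_fun B (r *\<^sub>R x) \<le> r * minkowski_fun B x"
proof -
  have "minkowski_fun B (r *\<^sub>R x) / r \<le> t" if "t \<in> minkowski_scales B x" for t
  proof -
    have "r * t \<in> minkowski_scales B (r *\<^sub>R x)"
      using assms(2) that unfolding minkowski_scales_def by auto
    then show ?thesis using minkowski_fun_le assms(2) by (simp add: field_simps)
  qed
  then have "minkowski_fun B (r *\<^sub>R x) / r \<le> minkowski_fun B x"
    by (rule minkowski_fun_ge[OF assms(1)])
  then show ?thesis using assms(2) by (simp add: field_simps)
qed

lemma minkowski_fun_scaleR:
  assumes "gauge_body B" "r > 0"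
  shows "minkowski_fun B (r *\<^sub>R x) = r * minkowski_fun B x"
proof -
  have "minkowski_fun B ((1/r) *\<^sub>R (r *\<^sub>R x)) \<le> (1/r) * minkowski_fun B (r *\<^sub>R x)"
    using minkowski_fun_scaleR_le[OF assms(1), of "1/r" "r *\<^sub>R x"] assms(2) by simp
  then have "r * minkowski_fun B x \<le> minkowski_fun B (r *\<^sub>R x)"
    using assms(2) by (simp add: field_simps)
  then show ?thesis using minkowski_fun_scaleR_le[OF assms, of x] by linarith
qed

lemma SD_skewness:
  assumes "v \<in> SD g" "0 \<le> g (- v)"
  shows "skewness g > 0" "g v = 1" "g (- v) = 1 / skewness g"
proof -
  have sv: "skewness g * g (- v) = 1" and "g v = 1" using assms(1) unfolding SD_def by auto
  then show "g v = 1" by simp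
  show s: "skewness g > 0"
  proof (rule ccontr)
    assume "\<not> skewness g > 0"
    then have "skewness g * g (- v) \<le> 0" using assms(2) by (simp add: mult_nonpos_nonneg)
    then show False using sv by simp
  qed
  show "g (- v) = 1 / skewness g" using sv s by (simp add: field_simps)
qed

lemma fw_shifted_lower_bound:
  assumes subadd: "\<And>x y. g (x + y) \<le> g x + g y" and nonneg: "\<And>x. 0 \<le> g x"
    and w: "\<And>a. a \<in> A \<Longrightarrow> 0 \<le> w a" and "C \<subseteq> A"
    and K: "\<And>c. c \<in> C \<Longrightarrow> g (c - x) \<le> K"
  shows "(\<Sum>c\<in>C. w c) * (g (M *\<^sub>R v) - K) \<le> fw_shifted g A C w v M x"
proof -
  have "g (M *\<^sub>R v) - K \<le> g (x - (c - M *\<^sub>R v))" if "c \<in> C" for c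
    using subadd[of "x - (c - M *\<^sub>R v)" "c - x"] K[OF that] by (simp add: algebra_simps)
  then have "(\<Sum>c\<in>C. w c * (g (M *\<^sub>R v) - K)) \<le> (\<Sum>c\<in>C. w c * g (x - (c - M *\<^sub>R v)))"
    using w \<open>C \<subseteq> A\<close> by (intro sum_mono mult_left_mono) auto
  moreover have "0 \<le> (\<Sum>d\<in>A - C. w d * g (x - d))"
    using w nonneg by (intro sum_nonneg) simp
  ultimately show ?thesis unfolding fw_shifted_def by (simp add: sum_distrib_right)
qed

lemma fw_shifted_upper_bound:
  assumes subadd: "\<And>x y. g (x + y) \<le> g x + g y"
    and w: "\<And>a. a \<in> A \<Longrightarrow> 0 \<le> w a" and "C \<subseteq> A"
    and K: "\<And>a. a \<in> A \<Longrightarrow> g (- a) \<le> K"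
  shows "fw_shifted g A C w v M (- (M *\<^sub>R v))
           \<le> (\<Sum>d\<in>A - C. w d) * (g (- (M *\<^sub>R v)) + K) + (\<Sum>c\<in>C. w c) * K"
proof -
  have "g (- (M *\<^sub>R v) - d) \<le> g (- (M *\<^sub>R v)) + K" if "d \<in> A - C" for d
    using subadd[of "- (M *\<^sub>R v)" "- d"] K[of d] that by simp
  then have "(\<Sum>d\<in>A - C. w d * g (- (M *\<^sub>R v) - d)) \<le> (\<Sum>d\<in>A - C. w d * (g (- (M *\<^sub>R v)) + K))"
    using w by (intro sum_mono mult_left_mono) auto
  moreover have "(\<Sum>c\<in>C. w c * g (- (M *\<^sub>R v) - (c - M *\<^sub>R v))) \<le> (\<Sum>c\<in>C. w c * K)"
    using w K \<open>C \<subseteq> A\<close> by (intro sum_mono mult_left_mono) auto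
  ultimately show ?thesis unfolding fw_shifted_def by (simp add: sum_distrib_right)
qed

theorem fw_shifted_antipode_beats_bounded:
  assumes subadd: "\<And>x y. g (x + y) \<le> g x + g y" and nonneg: "\<And>x. 0 \<le> g x"
    and homogeneous: "\<And>r x. r > 0 \<Longrightarrow> g (r *\<^sub>R x) = r * g x"
    and w: "\<And>a. a \<in> A \<Longrightarrow> 0 \<le> w a" and "C \<subseteq> A"
    and heavy: "(\<Sum>d\<in>A - C. w d) * g (- v) < (\<Sum>c\<in>C. w c) * g v"
    and "0 \<le> K" and K_U: "\<And>a x. a \<in> A \<Longrightarrow> x \<in> U \<Longrightarrow> g (a - x) \<le> K"
    and K_A: "\<And>a. a \<in> A \<Longrightarrow> g (- a) \<le> K"
  shows "\<exists>M0>0. \<forall>M>M0. \<forall>x\<in>U. fw_shifted g A C w v M (- (M *\<^sub>R v)) < fw_shifted g A C w v M x"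
proof -
  define wC where "wC = (\<Sum>c\<in>C. w c)"
  define wD where "wD = (\<Sum>d\<in>A - C. w d)"
  define \<delta> where "\<delta> = wC * g v - wD * g (- v)"
  define M0 where "M0 = (wD * K + 2 * wC * K + 1) / \<delta>"
  have "0 \<le> wC" "0 \<le> wD" "\<delta> > 0"
    using w \<open>C \<subseteq> A\<close> heavy unfolding wC_def wD_def \<delta>_def by (auto intro: sum_nonneg)
  then have "M0 > 0" unfolding M0_def using \<open>0 \<le> K\<close> by (simp add: add_nonneg_pos)
  moreover have "fw_shifted g A C w v M (- (M *\<^sub>R v)) < fw_shifted g A C w v M x"
    if "M > M0" "x \<in> U" for M x
  proof -
    have "M > 0" using \<open>M0 > 0\<close> that(1) by simp
    have "fw_shifted g A C w v M (- (M *\<^sub>R v)) \<le> wD * (g (- (M *\<^sub>R v)) + K) + wC * K"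
      unfolding wC_def wD_def using subadd w \<open>C \<subseteq> A\<close> K_A by (rule fw_shifted_upper_bound)
    also have "\<dots> = wD * (M * g (- v) + K) + wC * K"
      using homogeneous[OF \<open>M > 0\<close>, of "- v"] by simp
    also have "\<dots> < wC * (M * g v - K)"
      using \<open>M > M0\<close> \<open>\<delta> > 0\<close> unfolding M0_def \<delta>_def by (simp add: field_simps)
    also have "\<dots> = wC * (g (M *\<^sub>R v) - K)"
      using homogeneous[OF \<open>M > 0\<close>, of v] by simp
    also have "\<dots> \<le> fw_shifted g A C w v M x"
      unfolding wC_def using subadd nonneg w \<open>C \<subseteq> A\<close>
    proof (rule fw_shifted_lower_bound)
      show "g (c - x) \<le> K" if "c \<in> C" for c
        using K_U \<open>C \<subseteq> A\<close> that \<open>x \<in> U\<close> by blast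
    qed
    finally show ?thesis .
  qed
  ultimately show ?thesis by blast
qed

theorem mainTheorem4:
  fixes B :: "'a::euclidean_space set" and v :: 'a and A C U :: "'a set" and w :: "'a \<Rightarrow> real"
  assumes "gauge_body B"
    and "v \<in> SD (minkowski_fun B)"
    and "finite A"
    and "\<And>a. a \<in> A \<Longrightarrow> w a > 0"
    and "(\<Sum>a\<in>A. w a) = 1"
    and "C \<subseteq> A"
    and "(\<Sum>c\<in>C. w c) > 1 / (1 + skewness (minkowski_fun B))"
    and "bounded U"
  shows "\<exists>M0>0. \<forall>M>M0. \<forall>x.
           (\<forall>y. fw_shifted (minkowski_fun B) A C w v M x \<le> fw_shifted (minkowski_fun B) A C w v M y)
           \<longrightarrow> x \<notin> U"
proof -
  let ?g = "minkowski_fun B" and ?\<sigma> = "skewness (minkowski_fun B)"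
  have \<sigma>: "?\<sigma> > 0" "?g v = 1" "?g (- v) = 1 / ?\<sigma>"
    using SD_skewness[OF assms(2) minkowski_fun_nonneg[OF assms(1)]] by auto
  have "(\<Sum>d\<in>A - C. w d) + (\<Sum>c\<in>C. w c) = 1"
    using assms(3,5,6) by (metis sum.subset_diff)
  with assms(7) \<sigma>(1) have heavy: "(\<Sum>d\<in>A - C. w d) * ?g (- v) < (\<Sum>c\<in>C. w c) * ?g v"
    unfolding \<sigma>(2,3) by (simp add: field_simps)
  let ?T = "insert 0 (A \<union> U)"
  have differences_bounded: "bounded (\<Union>a\<in>?T. \<Union>x\<in>?T. {a - x})"
    using assms(3,8) by (intro bounded_differences) (auto simp: finite_imp_bounded)
  obtain K where "K \<ge> 0" and K: "\<And>z. z \<in> (\<Union>a\<in>?T. \<Union>x\<in>?T. {a - x}) \<Longrightarrow> ?g z \<le> K"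
    using minkowski_fun_bounded[OF assms(1) differences_bounded] by blast
  have K_U: "?g (a - x) \<le> K" if "a \<in> A" "x \<in> U" for a x
    using that by (intro K) blast
  have K_A: "?g (- a) \<le> K" if "a \<in> A" for a
    using K[of "0 - a"] that by auto
  have w: "0 \<le> w a" if "a \<in> A" for a
    using assms(4)[OF that] by simp
  obtain M0 where "M0 > 0"
    and beats: "\<And>M x. M > M0 \<Longrightarrow> x \<in> U \<Longrightarrow>
                  fw_shifted ?g A C w v M (- (M *\<^sub>R v)) < fw_shifted ?g A C w v M x"
    using fw_shifted_antipode_beats_bounded[of ?g A w C v K U] minkowski_fun_triangle[OF assms(1)]
      minkowski_fun_nonneg[OF assms(1)] minkowski_fun_scaleR[OF assms(1)] w assms(6) heavy
      \<open>K \<ge> 0\<close> K_U K_A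
    by metis
  show ?thesis
  proof (intro exI[of _ M0] conjI allI impI)
    fix M x
    assume "M > M0" and "\<forall>y. fw_shifted ?g A C w v M x \<le> fw_shifted ?g A C w v M y"
    then show "x \<notin> U" using beats[of M x] by (meson leD)
  qed fact
qed

end
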